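(* Let $\mathcal{A}$ be an additive category, $X$ an object of $\mathcal{A}$ with an action of a finite group $G$, and $H\subset G$ a subgroup such that the index $|G|/|H|$ is invertible in all Hom-groups of $\mathcal{A}$. Assume that the categorical quotients $X/L$ exist for all subgroups $L\subset G$. Then the fork diagram $$\partial_0,\partial_1:\bigoplus_{g\in G}X/(H\cap g^{-1}Hg)\rightrightarrows X/H\xrightarrow{e}X/G,$$ with $\partial_0=\bigoplus_{g}p_{H\cap g^{-1}Hg,H}$, $\partial_1=\bigoplus_gp_{H\cap g^{-1}Hg,H,g}$ and $e=p_{H,G}$, is a split fork diagram; in particular it is an absolute coequalizer diagram.
   Context: For $g\in G$, $[g]:X\to X$ denotes the corresponding automorphism, and for a subgroup $L$, $p_L:X\to X/L$ is the projection to the categorical quotient (the universal $L$-invariant morphism out of $X$). For subgroups $L,M\subset G$ and $g\in G$ with $gLg^{-1}\subset M$, $p_{L,M,g}:X/L\to X/M$ is the unique morphism with $p_{L,M,g}\circ p_L=p_M\circ[g]$; $p_{L,M}=p_{L,M,1}$. A fork $\partial_0,\partial_1:A\rightrightarrows B\xrightarrow{e}Z$ is split if $e\partial_0=e\partial_1$ and there exist $s:Z\to B$ and $t:B\to A$ with $es=\mathrm{Id}_Z$, $\partial_0t=\mathrm{Id}_B$, $\partial_1t=se$ (Mac Lane). *)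

theory Defs
  imports "HOL-Algebra.Group"
begin

record ('o, 'm) addcat =
  cObj  :: "'o set"
  cHom  :: "'o \<Rightarrow> 'o \<Rightarrow> 'm set"
  cId   :: "'o \<Rightarrow> 'm"
  cComp :: "'m \<Rightarrow> 'm \<Rightarrow> 'm"   (* cComp g f = g o f *)
  cAdd  :: "'o \<Rightarrow> 'o \<Rightarrow> 'm \<Rightarrow> 'm \<Rightarrow> 'm"
  cZero :: "'o \<Rightarrow> 'o \<Rightarrow> 'm"

definition category :: "('o, 'm, 'x) addcat_scheme \<Rightarrow> bool" where
  "category C \<longleftrightarrow>
    (\<forall>A\<in>cObj C. cId C A \<in> cHom C A A) \<and>
    (\<forall>A\<in>cObj C. \<forall>B\<in>cObj C. \<forall>D\<in>cObj C. \<forall>f\<in>cHom C A B. \<forall>g\<in>cHom C B D.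
        cComp C g f \<in> cHom C A D) \<and>
    (\<forall>A\<in>cObj C. \<forall>B\<in>cObj C. \<forall>D\<in>cObj C. \<forall>E\<in>cObj C.
       \<forall>f\<in>cHom C A B. \<forall>g\<in>cHom C B D. \<forall>h\<in>cHom C D E.
        cComp C h (cComp C g f) = cComp C (cComp C h g) f) \<and>
    (\<forall>A\<in>cObj C. \<forall>B\<in>cObj C. \<forall>f\<in>cHom C A B.
        cComp C f (cId C A) = f \<and> cComp C (cId C B) f = f)"

definition preadditive :: "('o, 'm, 'x) addcat_scheme \<Rightarrow> bool" where
  "preadditive C \<longleftrightarrow> category C \<and>
    (\<forall>A\<in>cObj C. \<forall>B\<in>cObj C.
       cZero C A B \<in> cHom C A B \<and>
       (\<forall>f\<in>cHom C A B. \<forall>g\<in>cHom C A B. cAdd C A B f g \<in> cHom C A B) \<and>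
       (\<forall>f\<in>cHom C A B. \<forall>g\<in>cHom C A B. \<forall>h\<in>cHom C A B.
           cAdd C A B (cAdd C A B f g) h = cAdd C A B f (cAdd C A B g h)) \<and>
       (\<forall>f\<in>cHom C A B. \<forall>g\<in>cHom C A B. cAdd C A B f g = cAdd C A B g f) \<and>
       (\<forall>f\<in>cHom C A B. cAdd C A B (cZero C A B) f = f) \<and>
       (\<forall>f\<in>cHom C A B. \<exists>g\<in>cHom C A B. cAdd C A B f g = cZero C A B)) \<and>
    (\<forall>A\<in>cObj C. \<forall>B\<in>cObj C. \<forall>D\<in>cObj C.
       \<forall>f\<in>cHom C A B. \<forall>f'\<in>cHom C A B. \<forall>g\<in>cHom C B D.
         cComp C g (cAdd C A B f f') = cAdd C A D (cComp C g f) (cComp C g f')) \<and>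
    (\<forall>A\<in>cObj C. \<forall>B\<in>cObj C. \<forall>D\<in>cObj C.
       \<forall>f\<in>cHom C A B. \<forall>g\<in>cHom C B D. \<forall>g'\<in>cHom C B D.
         cComp C (cAdd C B D g g') f = cAdd C A D (cComp C g f) (cComp C g' f))"

definition additive_category :: "('o, 'm, 'x) addcat_scheme \<Rightarrow> bool" where
  "additive_category C \<longleftrightarrow> preadditive C \<and>
    (\<exists>Z\<in>cObj C. \<forall>A\<in>cObj C. cHom C Z A = {cZero C Z A} \<and> cHom C A Z = {cZero C A Z}) \<and>
    (\<forall>A\<in>cObj C. \<forall>B\<in>cObj C. \<exists>P\<in>cObj C.
       \<exists>i1\<in>cHom C A P. \<exists>i2\<in>cHom C B P. \<exists>p1\<in>cHom C P A. \<exists>p2\<in>cHom C P B.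
         cComp C p1 i1 = cId C A \<and> cComp C p2 i2 = cId C B \<and>
         cComp C p1 i2 = cZero C B A \<and> cComp C p2 i1 = cZero C A B \<and>
         cAdd C P P (cComp C i1 p1) (cComp C i2 p2) = cId C P)"

definition nsmul :: "('o, 'm, 'x) addcat_scheme \<Rightarrow> 'o \<Rightarrow> 'o \<Rightarrow> nat \<Rightarrow> 'm \<Rightarrow> 'm" where
  "nsmul C A B n f = ((cAdd C A B f) ^^ n) (cZero C A B)"

definition invertible_in_homs :: "('o, 'm, 'x) addcat_scheme \<Rightarrow> nat \<Rightarrow> bool" where
  "invertible_in_homs C n \<longleftrightarrow>
    (\<forall>A\<in>cObj C. \<forall>B\<in>cObj C. bij_betw (nsmul C A B n) (cHom C A B) (cHom C A B))"

definition group_action_obj ::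
  "('o, 'm, 'x) addcat_scheme \<Rightarrow> ('g, 'b) monoid_scheme \<Rightarrow> 'o \<Rightarrow> ('g \<Rightarrow> 'm) \<Rightarrow> bool" where
  "group_action_obj C G X act \<longleftrightarrow> X \<in> cObj C \<and>
    (\<forall>g\<in>carrier G. act g \<in> cHom C X X) \<and>
    act \<one>\<^bsub>G\<^esub> = cId C X \<and>
    (\<forall>g\<in>carrier G. \<forall>h\<in>carrier G. act (g \<otimes>\<^bsub>G\<^esub> h) = cComp C (act g) (act h))"

definition is_cat_quotient ::
  "('o, 'm, 'x) addcat_scheme \<Rightarrow> 'o \<Rightarrow> ('g \<Rightarrow> 'm) \<Rightarrow> 'g set \<Rightarrow> 'o \<Rightarrow> 'm \<Rightarrow> bool" where
  "is_cat_quotient C X act L Y q \<longleftrightarrow> Y \<in> cObj C \<and> q \<in> cHom C X Y \<and>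
    (\<forall>l\<in>L. cComp C q (act l) = q) \<and>
    (\<forall>Z\<in>cObj C. \<forall>f\<in>cHom C X Z. (\<forall>l\<in>L. cComp C f (act l) = f) \<longrightarrow>
        (\<exists>!u. u \<in> cHom C Y Z \<and> cComp C u q = f))"

text \<open>p_{L,M,g}: the unique morphism X/L \<rightarrow> X/M with p_{L,M,g} o p_L = p_M o [g].\<close>
definition qmap ::
  "('o, 'm, 'x) addcat_scheme \<Rightarrow> ('g \<Rightarrow> 'm) \<Rightarrow> ('g set \<Rightarrow> 'o) \<Rightarrow> ('g set \<Rightarrow> 'm)
     \<Rightarrow> 'g set \<Rightarrow> 'g set \<Rightarrow> 'g \<Rightarrow> 'm" where
  "qmap C act Q p L M g = (THE u. u \<in> cHom C (Q L) (Q M) \<and> cComp C u (p L) = cComp C (p M) (act g))"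

definition conj_sub :: "('g, 'b) monoid_scheme \<Rightarrow> 'g \<Rightarrow> 'g set \<Rightarrow> 'g set" where
  "conj_sub G g H = {inv\<^bsub>G\<^esub> g \<otimes>\<^bsub>G\<^esub> h \<otimes>\<^bsub>G\<^esub> g | h. h \<in> H}"

definition is_coproduct ::
  "('o, 'm, 'x) addcat_scheme \<Rightarrow> 'i set \<Rightarrow> ('i \<Rightarrow> 'o) \<Rightarrow> 'o \<Rightarrow> ('i \<Rightarrow> 'm) \<Rightarrow> bool" where
  "is_coproduct C I Y P \<iota> \<longleftrightarrow> P \<in> cObj C \<and> (\<forall>i\<in>I. \<iota> i \<in> cHom C (Y i) P) \<and>
    (\<forall>Z\<in>cObj C. \<forall>f. (\<forall>i\<in>I. f i \<in> cHom C (Y i) Z) \<longrightarrow>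
        (\<exists>!u. u \<in> cHom C P Z \<and> (\<forall>i\<in>I. cComp C u (\<iota> i) = f i)))"

definition split_fork ::
  "('o, 'm, 'x) addcat_scheme \<Rightarrow> 'o \<Rightarrow> 'o \<Rightarrow> 'o \<Rightarrow> 'm \<Rightarrow> 'm \<Rightarrow> 'm \<Rightarrow> bool" where
  "split_fork C A B Z d0 d1 e \<longleftrightarrow>
    d0 \<in> cHom C A B \<and> d1 \<in> cHom C A B \<and> e \<in> cHom C B Z \<and>
    cComp C e d0 = cComp C e d1 \<and>
    (\<exists>s\<in>cHom C Z B. \<exists>t\<in>cHom C B A.
       cComp C e s = cId C Z \<and> cComp C d0 t = cId C B \<and> cComp C d1 t = cComp C s e)"

end

theory Submission
  imports Defs "HOL-Algebra.Coset" "HOL-Algebra.FiniteProduct"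
begin

text \<open>Let \<open>n = [G:H]\<close>. The sum of \<open>p\<^sub>H \<circ> [k]\<close> over the right cosets \<open>Hk\<close> of \<open>H\<close> in \<open>G\<close>
  is \<open>G\<close>-invariant, so it induces a transfer \<open>tr : X/G \<rightarrow> X/H\<close>, and \<open>e \<circ> tr = n\<close>; hence
  \<open>s = tr/n\<close> is a section of \<open>e\<close>. Summing, over the double cosets \<open>HgH\<close>, the composite of \<open>\<iota>\<^sub>g\<close>
  with the transfer \<open>X/H \<rightarrow> X/(H \<inter> g\<^sup>-\<^sup>1Hg)\<close> gives \<open>T : X/H \<rightarrow> P\<close>. The right cosets of \<open>H\<close>
  contained in \<open>HgH\<close> correspond to the right cosets of \<open>H \<inter> g\<^sup>-\<^sup>1Hg\<close> in \<open>H\<close>, and this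
  double coset decomposition of \<open>H\<setminus>G\<close> yields \<open>\<partial>\<^sub>0 \<circ> T = n\<close> and \<open>\<partial>\<^sub>1 \<circ> T = tr \<circ> e\<close>.
  Then \<open>t = T/n\<close> satisfies \<open>\<partial>\<^sub>0 t = id\<close> and \<open>\<partial>\<^sub>1 t = s e\<close>.\<close>

section \<open>Hom groups of a preadditive category\<close>

definition hom_group :: "('o, 'm, 'x) addcat_scheme \<Rightarrow> 'o \<Rightarrow> 'o \<Rightarrow> 'm monoid" where
  "hom_group C A B = \<lparr>carrier = cHom C A B, mult = cAdd C A B, one = cZero C A B\<rparr>"

lemma hom_group_simps [simp]:
  "carrier (hom_group C A B) = cHom C A B"
  "mult (hom_group C A B) = cAdd C A B"
  "one (hom_group C A B) = cZero C A B"
  by (simp_all add: hom_group_def)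

lemma hom_finprod_comm_group:
  assumes "comm_group M" "comm_group N" "h \<in> hom M N" "finite I" "f \<in> I \<rightarrow> carrier M"
  shows "h (finprod M f I) = finprod N (\<lambda>i. h (f i)) I"
proof -
  interpret M: comm_group M by fact
  interpret N: comm_group N by fact
  show ?thesis
    using assms(4,5)
  proof (induction I rule: finite_induct)
    case empty
    then show ?case using hom_one[OF assms(3) M.is_group N.is_group] by simp
  next
    case (insert i I)
    have "(\<lambda>i. h (f i)) \<in> insert i I \<rightarrow> carrier N"
      using insert.prems hom_in_carrier[OF assms(3)] by blast
    with insert show ?case using hom_mult[OF assms(3)] by (simp add: Pi_iff)
  qed
qed

lemma nsmul_cancel:
  assumes "invertible_in_homs C n" "A \<in> cObj C" "B \<in> cObj C" "f \<in> cHom C A B" "g \<in> cHom C A B"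
    and "nsmul C A B n f = nsmul C A B n g"
  shows "f = g"
  using assms unfolding invertible_in_homs_def bij_betw_def inj_on_def by simp

lemma nsmul_surj:
  assumes "invertible_in_homs C n" "A \<in> cObj C" "B \<in> cObj C" "g \<in> cHom C A B"
  obtains f where "f \<in> cHom C A B" "nsmul C A B n f = g"
proof -
  have "g \<in> nsmul C A B n ` cHom C A B"
    using assms unfolding invertible_in_homs_def bij_betw_def by simp
  then show ?thesis using that by blast
qed

locale preadditive_category =
  fixes C :: "('o, 'm, 'x) addcat_scheme"
  assumes preadditive: "preadditive C"
begin

lemma category: "category C"
  using preadditive unfolding preadditive_def by blast

lemma id_closed: "A \<in> cObj C \<Longrightarrow> cId C A \<in> cHom C A A"
  using category unfolding category_def by blast

lemma comp_closed:
  "\<lbrakk>A \<in> cObj C; B \<in> cObj C; D \<in> cObj C; f \<in> cHom C A B; g \<in> cHom C B D\<rbrakk>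
   \<Longrightarrow> cComp C g f \<in> cHom C A D"
  using category unfolding category_def by blast

lemma comp_assoc:
  "\<lbrakk>A \<in> cObj C; B \<in> cObj C; D \<in> cObj C; E \<in> cObj C;
    f \<in> cHom C A B; g \<in> cHom C B D; h \<in> cHom C D E\<rbrakk>
   \<Longrightarrow> cComp C (cComp C h g) f = cComp C h (cComp C g f)"
  using category unfolding category_def by (metis (no_types))

lemma comp_id_right: "\<lbrakk>A \<in> cObj C; B \<in> cObj C; f \<in> cHom C A B\<rbrakk> \<Longrightarrow> cComp C f (cId C A) = f"
  using category unfolding category_def by blast

lemma comp_id_left: "\<lbrakk>A \<in> cObj C; B \<in> cObj C; f \<in> cHom C A B\<rbrakk> \<Longrightarrow> cComp C (cId C B) f = f"
  using category unfolding category_def by blast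

lemma comm_group_hom_group:
  assumes "A \<in> cObj C" "B \<in> cObj C"
  shows "comm_group (hom_group C A B)"
proof -
  note ab = preadditive[unfolded preadditive_def, THEN conjunct2, THEN conjunct1,
      rule_format, OF assms]
  show ?thesis
    by (rule comm_groupI) (use ab in \<open>simp_all, metis+\<close>)
qed

lemma comm_monoid_hom_group: "A \<in> cObj C \<Longrightarrow> B \<in> cObj C \<Longrightarrow> comm_monoid (hom_group C A B)"
  using comm_group_hom_group by (rule comm_group.axioms(1))

lemma comp_left_hom:
  assumes "A \<in> cObj C" "B \<in> cObj C" "D \<in> cObj C" "u \<in> cHom C B D"
  shows "(\<lambda>f. cComp C u f) \<in> hom (hom_group C A B) (hom_group C A D)"
  using preadditive assms comp_closed unfolding preadditive_def hom_def by auto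

lemma comp_right_hom:
  assumes "A \<in> cObj C" "B \<in> cObj C" "D \<in> cObj C" "v \<in> cHom C A B"
  shows "(\<lambda>f. cComp C f v) \<in> hom (hom_group C B D) (hom_group C A D)"
  using preadditive assms comp_closed unfolding preadditive_def hom_def by auto

lemma comp_finprod_left:
  assumes "A \<in> cObj C" "B \<in> cObj C" "D \<in> cObj C" "u \<in> cHom C B D"
    and "finite I" "f \<in> I \<rightarrow> cHom C A B"
  shows "cComp C u (finprod (hom_group C A B) f I) = finprod (hom_group C A D) (\<lambda>i. cComp C u (f i)) I"
  using hom_finprod_comm_group[OF comm_group_hom_group comm_group_hom_group comp_left_hom] assms
  by simp

lemma comp_finprod_right:
  assumes "A \<in> cObj C" "B \<in> cObj C" "D \<in> cObj C" "v \<in> cHom C A B"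
    and "finite I" "f \<in> I \<rightarrow> cHom C B D"
  shows "cComp C (finprod (hom_group C B D) f I) v = finprod (hom_group C A D) (\<lambda>i. cComp C (f i) v) I"
  using hom_finprod_comm_group[OF comm_group_hom_group comm_group_hom_group comp_right_hom] assms
  by simp

lemma nsmul_eq_nat_pow:
  assumes "A \<in> cObj C" "B \<in> cObj C" "f \<in> cHom C A B"
  shows "nsmul C A B n f = f [^]\<^bsub>hom_group C A B\<^esub> n"
proof -
  interpret comm_group "hom_group C A B" by (rule comm_group_hom_group[OF assms(1,2)])
  show ?thesis
  proof (induction n)
    case (Suc n)
    then show ?case
      using assms(3) m_comm[of f "f [^]\<^bsub>hom_group C A B\<^esub> n"] nat_pow_closed[of f n]
      by (simp add: nsmul_def)
  qed (simp add: nsmul_def)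
qed

lemma nsmul_closed:
  assumes "A \<in> cObj C" "B \<in> cObj C" "f \<in> cHom C A B"
  shows "nsmul C A B n f \<in> cHom C A B"
proof -
  interpret comm_group "hom_group C A B" by (rule comm_group_hom_group[OF assms(1,2)])
  show ?thesis using assms nat_pow_closed[of f n] by (simp add: nsmul_eq_nat_pow)
qed

lemma comp_nsmul_left:
  assumes "A \<in> cObj C" "B \<in> cObj C" "D \<in> cObj C" "u \<in> cHom C B D" "f \<in> cHom C A B"
  shows "cComp C u (nsmul C A B n f) = nsmul C A D n (cComp C u f)"
  using hom_nat_pow[OF comp_left_hom] assms comm_group.axioms(2)[OF comm_group_hom_group]
  by (simp add: nsmul_eq_nat_pow comp_closed)

lemma comp_nsmul_right:
  assumes "A \<in> cObj C" "B \<in> cObj C" "D \<in> cObj C" "v \<in> cHom C A B" "f \<in> cHom C B D"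
  shows "cComp C (nsmul C B D n f) v = nsmul C A D n (cComp C f v)"
  using hom_nat_pow[OF comp_right_hom] assms comm_group.axioms(2)[OF comm_group_hom_group]
  by (simp add: nsmul_eq_nat_pow comp_closed)

lemma split_fork_of_scaled_splitting:
  assumes n: "invertible_in_homs C n"
    and obj: "A \<in> cObj C" "B \<in> cObj C" "Z \<in> cObj C"
    and hom: "d0 \<in> cHom C A B" "d1 \<in> cHom C A B" "e \<in> cHom C B Z" "S \<in> cHom C Z B" "T \<in> cHom C B A"
    and fork: "cComp C e d0 = cComp C e d1"
    and eS: "cComp C e S = nsmul C Z Z n (cId C Z)"
    and d0T: "cComp C d0 T = nsmul C B B n (cId C B)"
    and d1T: "cComp C d1 T = cComp C S e"
  shows "split_fork C A B Z d0 d1 e"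
proof -
  obtain s where s: "s \<in> cHom C Z B" "nsmul C Z B n s = S" using nsmul_surj[OF n obj(3,2) hom(4)] .
  obtain t where t: "t \<in> cHom C B A" "nsmul C B A n t = T" using nsmul_surj[OF n obj(2,1) hom(5)] .
  have "nsmul C Z Z n (cComp C e s) = nsmul C Z Z n (cId C Z)"
    using comp_nsmul_left[OF obj(3,2,3) hom(3) s(1), of n] s(2) eS by simp
  then have "cComp C e s = cId C Z"
    by (rule nsmul_cancel[OF n obj(3,3) comp_closed[OF obj(3,2,3) s(1) hom(3)] id_closed[OF obj(3)]])
  moreover have "nsmul C B B n (cComp C d0 t) = nsmul C B B n (cId C B)"
    using comp_nsmul_left[OF obj(2,1,2) hom(1) t(1), of n] t(2) d0T by simp
  then have "cComp C d0 t = cId C B"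
    by (rule nsmul_cancel[OF n obj(2,2) comp_closed[OF obj(2,1,2) t(1) hom(1)] id_closed[OF obj(2)]])
  moreover have "nsmul C B B n (cComp C d1 t) = nsmul C B B n (cComp C s e)"
    using comp_nsmul_left[OF obj(2,1,2) hom(2) t(1), of n] comp_nsmul_right[OF obj(2,3,2) hom(3)
        s(1), of n]
      s(2) t(2) d1T by simp
  then have "cComp C d1 t = cComp C s e"
    by (rule nsmul_cancel[OF n obj(2,2) comp_closed[OF obj(2,1,2) t(1) hom(2)] comp_closed[OF
        obj(2,3,2) hom(3) s(1)]])
  ultimately show ?thesis unfolding split_fork_def using hom fork s(1) t(1) by blast
qed

end

section \<open>Sums over right cosets\<close>

definition rcosets_in :: "('g, 'b) monoid_scheme \<Rightarrow> 'g set \<Rightarrow> 'g set \<Rightarrow> 'g set set" where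
  "rcosets_in G L K = (\<lambda>k. L #>\<^bsub>G\<^esub> k) ` K"

definition coset_rep :: "'g set \<Rightarrow> 'g" where
  "coset_rep c = (SOME x. x \<in> c)"

text \<open>Independent of the chosen representatives only when \<open>F\<close> is left \<open>L\<close>-invariant on \<open>K\<close>.\<close>
definition coset_sum ::
  "('c, 'd) monoid_scheme \<Rightarrow> ('g, 'b) monoid_scheme \<Rightarrow> 'g set \<Rightarrow> 'g set \<Rightarrow> ('g \<Rightarrow> 'c) \<Rightarrow> 'c" where
  "coset_sum M G L K F = finprod M (\<lambda>c. F (coset_rep c)) (rcosets_in G L K)"

context group
begin

lemma rcos_eq_iff_mult_inv:
  assumes "subgroup H G" "a \<in> carrier G" "b \<in> carrier G"
  shows "H #> a = H #> b \<longleftrightarrow> a \<otimes> inv b \<in> H"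
  using assms coset_mult_inv1 coset_mult_inv2 coset_join1 coset_join2 subgroup.subset
  by (metis inv_closed m_closed)

lemma coset_rep_rcos:
  assumes "subgroup L G" "k \<in> carrier G"
  obtains l where "l \<in> L" "coset_rep (L #> k) = l \<otimes> k"
proof -
  have "coset_rep (L #> k) \<in> L #> k"
    unfolding coset_rep_def by (rule someI[of _ k]) (rule rcos_self[OF assms(2,1)])
  then show ?thesis using that unfolding r_coset_def by blast
qed

lemma coset_rep_rcosets_in:
  assumes "subgroup L G" "subgroup K G" "L \<subseteq> K" "c \<in> rcosets_in G L K"
  shows "coset_rep c \<in> K" "c = L #> coset_rep c"
proof -
  obtain k where k: "k \<in> K" "c = L #> k" using assms(4) unfolding rcosets_in_def by blast
  have kG: "k \<in> carrier G" using subgroup.mem_carrier[OF assms(2) k(1)] .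
  obtain l where l: "l \<in> L" "coset_rep c = l \<otimes> k" using coset_rep_rcos[OF assms(1) kG] k(2) by blast
  show "coset_rep c \<in> K" using l k assms(2,3) subgroup.m_closed by (metis subsetD)
  show "c = L #> coset_rep c"
    using repr_independence[OF _ kG assms(1)] l k rcosI[OF l(1) subgroup.subset[OF assms(1)] kG]
    by simp
qed

lemma coset_rep_eval:
  assumes "subgroup L G" "k \<in> carrier G" "\<And>l. l \<in> L \<Longrightarrow> F (l \<otimes> k) = F k"
  shows "F (coset_rep (L #> k)) = F k"
  using coset_rep_rcos[OF assms(1,2)] assms(3) by metis

lemma finite_rcosets_in: "finite (carrier G) \<Longrightarrow> K \<subseteq> carrier G \<Longrightarrow> finite (rcosets_in G L K)"
  unfolding rcosets_in_def by (blast intro: finite_imageI finite_subset)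

lemma rcosets_in_carrier: "rcosets_in G H (carrier G) = rcosets H"
  unfolding rcosets_in_def RCOSETS_def by blast

lemma card_rcosets_in_carrier:
  assumes "finite (carrier G)" "subgroup H G"
  shows "card (rcosets_in G H (carrier G)) = card (carrier G) div card H"
proof -
  have "card H > 0"
    using assms finite_subset[OF subgroup.subset] subgroup.one_closed by (metis card_gt_0_iff empty_iff)
  then show ?thesis
    using lagrange[OF assms(2)] unfolding order_def rcosets_in_carrier
    by (metis nonzero_mult_div_cancel_right not_gr0)
qed

lemma coset_sum_closed:
  assumes "comm_monoid M" "subgroup L G" "subgroup K G" "L \<subseteq> K" "F \<in> K \<rightarrow> carrier M"
  shows "coset_sum M G L K F \<in> carrier M"
  unfolding coset_sum_def
  by (rule comm_monoid.finprod_closed[OF assms(1)])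
     (use coset_rep_rcosets_in(1)[OF assms(2-4)] assms(5) in blast)

lemma coset_sum_cong:
  assumes "comm_monoid M" "subgroup L G" "subgroup K G" "L \<subseteq> K" "F' \<in> K \<rightarrow> carrier M"
    and "\<And>k. k \<in> K \<Longrightarrow> F k = F' k"
  shows "coset_sum M G L K F = coset_sum M G L K F'"
  unfolding coset_sum_def
  by (rule comm_monoid.finprod_cong'[OF assms(1) refl])
     (use coset_rep_rcosets_in(1)[OF assms(2-4)] assms(5,6) in auto)

lemma coset_sum_const:
  assumes "comm_monoid M" "x \<in> carrier M"
  shows "coset_sum M G L K (\<lambda>_. x) = x [^]\<^bsub>M\<^esub> card (rcosets_in G L K)"
  unfolding coset_sum_def using comm_monoid.finprod_const[OF assms] .

lemma coset_sum_hom: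
  assumes "comm_group M" "comm_group N" "h \<in> hom M N" "finite (carrier G)"
    and "subgroup L G" "subgroup K G" "L \<subseteq> K" "F \<in> K \<rightarrow> carrier M"
  shows "h (coset_sum M G L K F) = coset_sum N G L K (\<lambda>k. h (F k))"
  unfolding coset_sum_def
  by (rule hom_finprod_comm_group[OF assms(1-3) finite_rcosets_in[OF assms(4) subgroup.subset[OF
      assms(6)]]])
     (use coset_rep_rcosets_in(1)[OF assms(5-7)] assms(8) in auto)

lemma bij_betw_rcosets_in_right_translate:
  assumes "subgroup L G" "subgroup K G" "y \<in> K"
  shows "bij_betw (\<lambda>c. c #> y) (rcosets_in G L K) (rcosets_in G L K)"
proof -
  have yG: "y \<in> carrier G" using subgroup.mem_carrier[OF assms(2,3)] .
  have LG: "L \<subseteq> carrier G" using subgroup.subset[OF assms(1)] .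
  have KG: "K \<subseteq> carrier G" using subgroup.subset[OF assms(2)] .
  have translate: "L #> k #> y = L #> (k \<otimes> y)" if "k \<in> K" for k
    using coset_mult_assoc[OF LG _ yG] that KG by blast
  have "(\<lambda>k. k \<otimes> y) ` K = K"
    using subgroup.rcos_const[OF assms(2) is_group assms(3)] unfolding r_coset_def by auto
  moreover have "(\<lambda>c. c #> y) ` rcosets_in G L K = (\<lambda>k. L #> (k \<otimes> y)) ` K"
    unfolding rcosets_in_def image_image using translate by (rule image_cong[OF refl])
  ultimately have "(\<lambda>c. c #> y) ` rcosets_in G L K = rcosets_in G L K"
    unfolding rcosets_in_def by (metis image_image)
  moreover have "inj_on (\<lambda>c. c #> y) (rcosets_in G L K)"
  proof (rule inj_onI)
    fix c d assume "c \<in> rcosets_in G L K" "d \<in> rcosets_in G L K" and e: "c #> y = d #> y"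
    then have "c \<subseteq> carrier G" "d \<subseteq> carrier G"
      unfolding rcosets_in_def using r_coset_subset_G[OF LG] KG by auto
    then have "c #> y #> inv y = c" "d #> y #> inv y = d" by (simp_all add: coset_mult_assoc yG)
    then show "c = d" using e by metis
  qed
  ultimately show ?thesis unfolding bij_betw_def by simp
qed

lemma coset_sum_right_translate:
  assumes "comm_monoid M" "subgroup L G" "subgroup K G" "L \<subseteq> K" "F \<in> K \<rightarrow> carrier M"
    and invariant: "\<And>l k. l \<in> L \<Longrightarrow> k \<in> K \<Longrightarrow> F (l \<otimes> k) = F k"
    and "y \<in> K"
  shows "coset_sum M G L K (\<lambda>k. F (k \<otimes> y)) = coset_sum M G L K F"
proof -
  interpret M: comm_monoid M by fact
  note bij = bij_betw_rcosets_in_right_translate[OF assms(2,3,7)]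
  note rep = coset_rep_rcosets_in[OF assms(2-4)]
  have "(\<lambda>c. F (coset_rep c)) \<in> (\<lambda>c. c #> y) ` rcosets_in G L K \<rightarrow> carrier M"
    unfolding bij_betw_imp_surj_on[OF bij] using rep(1) assms(5) by auto
  from M.finprod_reindex[OF this bij_betw_imp_inj_on[OF bij]]
  have "coset_sum M G L K F = finprod M (\<lambda>c. F (coset_rep (c #> y))) (rcosets_in G L K)"
    unfolding coset_sum_def bij_betw_imp_surj_on[OF bij] .
  also have "\<dots> = coset_sum M G L K (\<lambda>k. F (k \<otimes> y))"
    unfolding coset_sum_def
  proof (rule M.finprod_cong'[OF refl])
    fix c assume c: "c \<in> rcosets_in G L K"
    have ky: "coset_rep c \<otimes> y \<in> K" using subgroup.m_closed[OF assms(3) rep(1)[OF c] assms(7)] .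
    have "c #> y = L #> coset_rep c #> y" using rep(2)[OF c] by (rule arg_cong)
    also have "\<dots> = L #> (coset_rep c \<otimes> y)"
      using coset_mult_assoc subgroup.subset[OF assms(2)] subgroup.mem_carrier[OF assms(3)] rep(1)[OF c]
        assms(7) by simp
    finally show "F (coset_rep (c #> y)) = F (coset_rep c \<otimes> y)"
      using coset_rep_eval[OF assms(2) subgroup.mem_carrier[OF assms(3) ky] invariant[OF _ ky]] by simp
  next
    show "(\<lambda>c. F (coset_rep c \<otimes> y)) \<in> rcosets_in G L K \<rightarrow> carrier M"
      using subgroup.m_closed[OF assms(3) rep(1) assms(7)] assms(5) by blast
  qed
  finally show ?thesis by simp
qed

end

section \<open>Double cosets\<close>

definition double_coset :: "('g, 'b) monoid_scheme \<Rightarrow> 'g set \<Rightarrow> 'g \<Rightarrow> 'g set" where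
  "double_coset G H x = {h1 \<otimes>\<^bsub>G\<^esub> x \<otimes>\<^bsub>G\<^esub> h2 | h1 h2. h1 \<in> H \<and> h2 \<in> H}"

context group
begin

lemma inv_mult_cancel_left [simp]: "x \<in> carrier G \<Longrightarrow> y \<in> carrier G \<Longrightarrow> inv x \<otimes> (x \<otimes> y) = y"
  by (simp flip: m_assoc)

lemma mult_inv_cancel_left [simp]: "x \<in> carrier G \<Longrightarrow> y \<in> carrier G \<Longrightarrow> x \<otimes> (inv x \<otimes> y) = y"
  by (simp flip: m_assoc)

lemma conj_sub_mem:
  assumes "subgroup H G" "g \<in> carrier G"
  shows "x \<in> conj_sub G g H \<longleftrightarrow> x \<in> carrier G \<and> g \<otimes> x \<otimes> inv g \<in> H"
proof
  assume "x \<in> conj_sub G g H"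
  then obtain h where h: "h \<in> H" "x = inv g \<otimes> h \<otimes> g" unfolding conj_sub_def by blast
  moreover have "h \<in> carrier G" using subgroup.mem_carrier[OF assms(1) h(1)] .
  ultimately show "x \<in> carrier G \<and> g \<otimes> x \<otimes> inv g \<in> H"
    using assms(2) by (simp add: m_assoc)
next
  assume x: "x \<in> carrier G \<and> g \<otimes> x \<otimes> inv g \<in> H"
  then have "x = inv g \<otimes> (g \<otimes> x \<otimes> inv g) \<otimes> g" using assms(2) by (simp add: m_assoc)
  then show "x \<in> conj_sub G g H" unfolding conj_sub_def using x by blast
qed

lemma subgroup_conj_sub:
  assumes "subgroup H G" "g \<in> carrier G"
  shows "subgroup (conj_sub G g H) G"
proof (rule subgroupI)
  show "conj_sub G g H \<subseteq> carrier G" using conj_sub_mem[OF assms] by blast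
  show "conj_sub G g H \<noteq> {}"
    using conj_sub_mem[OF assms, of \<one>] assms subgroup.one_closed by fastforce
next
  fix a assume "a \<in> conj_sub G g H"
  then have a: "a \<in> carrier G" "g \<otimes> a \<otimes> inv g \<in> H" using conj_sub_mem[OF assms] by auto
  have "g \<otimes> inv a \<otimes> inv g = inv (g \<otimes> a \<otimes> inv g)"
    using a(1) assms(2) by (simp add: inv_mult_group m_assoc)
  then show "inv a \<in> conj_sub G g H"
    using conj_sub_mem[OF assms] a subgroup.m_inv_closed[OF assms(1)] by simp
next
  fix a b assume "a \<in> conj_sub G g H" "b \<in> conj_sub G g H"
  then have ab: "a \<in> carrier G" "g \<otimes> a \<otimes> inv g \<in> H" "b \<in> carrier G" "g \<otimes> b \<otimes> inv g \<in> H"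
    using conj_sub_mem[OF assms] by auto
  have "g \<otimes> (a \<otimes> b) \<otimes> inv g = (g \<otimes> a \<otimes> inv g) \<otimes> (g \<otimes> b \<otimes> inv g)"
    using ab assms(2) by (simp add: m_assoc)
  then show "a \<otimes> b \<in> conj_sub G g H"
    using conj_sub_mem[OF assms] ab subgroup.m_closed[OF assms(1)] by simp
qed

lemma subgroup_inter_conj_sub:
  "subgroup H G \<Longrightarrow> g \<in> carrier G \<Longrightarrow> subgroup (H \<inter> conj_sub G g H) G"
  by (rule subgroups_Inter_pair[OF _ subgroup_conj_sub])

lemma one_conj_mem: "subgroup L G \<Longrightarrow> L \<subseteq> M \<Longrightarrow> l \<in> L \<Longrightarrow> \<one> \<otimes> l \<otimes> inv \<one> \<in> M"
  using subgroup.mem_carrier by fastforce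

lemma double_coset_self:
  assumes "subgroup H G" "x \<in> carrier G"
  shows "x \<in> double_coset G H x"
proof -
  have "x = \<one> \<otimes> x \<otimes> \<one>" using assms(2) by simp
  then show ?thesis unfolding double_coset_def using subgroup.one_closed[OF assms(1)] by blast
qed

lemma double_coset_subset_carrier:
  "subgroup H G \<Longrightarrow> x \<in> carrier G \<Longrightarrow> double_coset G H x \<subseteq> carrier G"
  unfolding double_coset_def using subgroup.mem_carrier by fastforce

lemma double_coset_eq:
  assumes "subgroup H G" "x \<in> carrier G" "y \<in> double_coset G H x"
  shows "double_coset G H y = double_coset G H x"
proof -
  obtain a b where ab: "a \<in> H" "b \<in> H" "y = a \<otimes> x \<otimes> b"
    using assms(3) unfolding double_coset_def by blast
  have HG: "h \<in> H \<Longrightarrow> h \<in> carrier G" for h using subgroup.mem_carrier[OF assms(1)] .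
  note closed = subgroup.m_closed[OF assms(1)] subgroup.m_inv_closed[OF assms(1)]
  show ?thesis
  proof (intro equalityI subsetI)
    fix z assume "z \<in> double_coset G H y"
    then obtain c d where cd: "c \<in> H" "d \<in> H" "z = c \<otimes> y \<otimes> d"
      unfolding double_coset_def by blast
    then have "z = (c \<otimes> a) \<otimes> x \<otimes> (b \<otimes> d)" using ab HG assms(2) by (simp add: m_assoc)
    then show "z \<in> double_coset G H x" unfolding double_coset_def using ab cd closed by blast
  next
    fix z assume "z \<in> double_coset G H x"
    then obtain c d where cd: "c \<in> H" "d \<in> H" "z = c \<otimes> x \<otimes> d"
      unfolding double_coset_def by blast
    then have "z = (c \<otimes> inv a) \<otimes> y \<otimes> (inv b \<otimes> d)" using ab HG assms(2) by (simp add: m_assoc)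
    then show "z \<in> double_coset G H y" unfolding double_coset_def using ab cd closed by blast
  qed
qed

lemma double_coset_eq_of_mem:
  assumes "subgroup H G" "D \<in> double_coset G H ` carrier G" "k \<in> D"
  shows "D = double_coset G H k"
proof -
  obtain x where x: "x \<in> carrier G" "D = double_coset G H x" using assms(2) by blast
  then have "k \<in> double_coset G H x" using assms(3) by simp
  from double_coset_eq[OF assms(1) x(1) this] x(2) show ?thesis by simp
qed

lemma coset_rep_double_coset:
  assumes "subgroup H G" "D \<in> double_coset G H ` carrier G"
  shows "coset_rep D \<in> carrier G" "D = double_coset G H (coset_rep D)"
proof -
  obtain x where x: "x \<in> carrier G" "D = double_coset G H x" using assms(2) by blast
  have rep: "coset_rep D \<in> D"
    unfolding coset_rep_def by (rule someI[of _ x]) (use double_coset_self[OF assms(1) x(1)] x in simp)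
  then show "coset_rep D \<in> carrier G" using double_coset_subset_carrier[OF assms(1) x(1)] x(2) by blast
  show "D = double_coset G H (coset_rep D)" by (rule double_coset_eq_of_mem[OF assms rep])
qed

lemma rcos_subset_double_coset:
  assumes "subgroup H G" "g \<in> carrier G" "h \<in> H"
  shows "H #> (g \<otimes> h) \<subseteq> double_coset G H g"
proof
  fix z assume "z \<in> H #> (g \<otimes> h)"
  then obtain h' where h': "h' \<in> H" "z = h' \<otimes> (g \<otimes> h)" unfolding r_coset_def by blast
  then have "z = h' \<otimes> g \<otimes> h" using assms subgroup.mem_carrier by (metis m_assoc)
  with h'(1) assms(3) show "z \<in> double_coset G H g" unfolding double_coset_def by blast
qed

lemma rcos_in_double_coset:
  assumes "subgroup H G" "g \<in> carrier G" "c \<in> rcosets H" "c \<subseteq> double_coset G H g"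
  obtains h where "h \<in> H" "c = H #> (g \<otimes> h)"
proof -
  have HG: "h \<in> H \<Longrightarrow> h \<in> carrier G" for h using subgroup.mem_carrier[OF assms(1)] .
  obtain k where k: "k \<in> carrier G" "c = H #> k" using assms(3) unfolding RCOSETS_def by blast
  then have "k \<in> double_coset G H g" using rcos_self[OF k(1) assms(1)] assms(4) by blast
  then obtain h1 h2 where h: "h1 \<in> H" "h2 \<in> H" "k = h1 \<otimes> g \<otimes> h2"
    unfolding double_coset_def by blast
  then have "k \<otimes> inv (g \<otimes> h2) = h1" using assms(2) HG by (simp add: inv_mult_group m_assoc)
  then have "c = H #> (g \<otimes> h2)"
    using rcos_eq_iff_mult_inv[OF assms(1) k(1)] k(2) h(1,2) assms(2) HG by simp
  with h(2) show thesis by (rule that)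
qed

lemma rcosets_eq_Union_double_cosets:
  assumes "subgroup H G"
  shows "rcosets H = (\<Union>D \<in> double_coset G H ` carrier G. {c \<in> rcosets H. c \<subseteq> D})"
proof -
  have "H #> k \<subseteq> double_coset G H k" if "k \<in> carrier G" for k
    using rcos_subset_double_coset[OF assms that subgroup.one_closed[OF assms]] that by simp
  then show ?thesis unfolding RCOSETS_def by blast
qed

lemma rcosets_in_double_cosets_disjoint:
  assumes "subgroup H G"
  shows "pairwise (\<lambda>D D'. disjnt {c \<in> rcosets H. c \<subseteq> D} {c \<in> rcosets H. c \<subseteq> D'})
           (double_coset G H ` carrier G)"
proof (rule pairwiseI)
  fix D D' assume D: "D \<in> double_coset G H ` carrier G" and D': "D' \<in> double_coset G H ` carrier G"
    and "D \<noteq> D'"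
  have "D = D'" if c: "c \<in> rcosets H" "c \<subseteq> D" "c \<subseteq> D'" for c
  proof -
    obtain k where k: "k \<in> carrier G" "c = H #> k" using c(1) unfolding RCOSETS_def by blast
    then have "k \<in> c" using rcos_self[OF k(1) assms] by simp
    then have "k \<in> D" "k \<in> D'" using c(2,3) by blast+
    then show "D = D'"
      using double_coset_eq_of_mem[OF assms D] double_coset_eq_of_mem[OF assms D'] by metis
  qed
  with \<open>D \<noteq> D'\<close> show "disjnt {c \<in> rcosets H. c \<subseteq> D} {c \<in> rcosets H. c \<subseteq> D'}"
    unfolding disjnt_def by blast
qed

lemma rcos_conj_eq_iff:
  assumes "subgroup H G" "g \<in> carrier G" "a \<in> H" "b \<in> H"
  shows "H #> (g \<otimes> a) = H #> (g \<otimes> b) \<longleftrightarrow> (H \<inter> conj_sub G g H) #> a = (H \<inter> conj_sub G g H) #> b"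
proof -
  have abG: "a \<in> carrier G" "b \<in> carrier G" using assms(3,4) subgroup.mem_carrier[OF assms(1)] by auto
  have "(g \<otimes> a) \<otimes> inv (g \<otimes> b) = g \<otimes> (a \<otimes> inv b) \<otimes> inv g"
    using assms(2) abG by (simp add: inv_mult_group m_assoc)
  moreover have "a \<otimes> inv b \<in> H" using assms(1,3,4) subgroup.m_closed subgroup.m_inv_closed by metis
  ultimately show ?thesis
    using rcos_eq_iff_mult_inv[OF assms(1)] rcos_eq_iff_mult_inv[OF subgroup_inter_conj_sub[OF
        assms(1,2)]]
      conj_sub_mem[OF assms(1,2)] assms(2) abG
    by simp
qed

lemma bij_betw_rcosets_in_double_coset:
  assumes "subgroup H G" "g \<in> carrier G"
  shows "bij_betw (\<lambda>c. H #> (g \<otimes> coset_rep c)) (rcosets_in G (H \<inter> conj_sub G g H) H)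
           {c \<in> rcosets H. c \<subseteq> double_coset G H g}"
proof -
  let ?L = "H \<inter> conj_sub G g H"
  let ?\<phi> = "\<lambda>c. H #> (g \<otimes> coset_rep c)"
  note rep = coset_rep_rcosets_in[OF subgroup_inter_conj_sub[OF assms] assms(1) Int_lower1]
  have "inj_on ?\<phi> (rcosets_in G ?L H)"
  proof (rule inj_onI)
    fix c d assume c: "c \<in> rcosets_in G ?L H" and d: "d \<in> rcosets_in G ?L H" and "?\<phi> c = ?\<phi> d"
    then have "?L #> coset_rep c = ?L #> coset_rep d"
      using rcos_conj_eq_iff[OF assms rep(1)[OF c] rep(1)[OF d]] by blast
    then show "c = d" by (rule trans[OF rep(2)[OF c] trans[OF _ rep(2)[OF d, symmetric]]])
  qed
  moreover have "?\<phi> ` rcosets_in G ?L H \<subseteq> {c \<in> rcosets H. c \<subseteq> double_coset G H g}"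
    using rcosetsI[OF subgroup.subset[OF assms(1)]] rcos_subset_double_coset[OF assms] rep(1)
      assms(2) subgroup.mem_carrier[OF assms(1)] by auto
  moreover have "c \<in> ?\<phi> ` rcosets_in G ?L H" if c: "c \<in> rcosets H" "c \<subseteq> double_coset G H g" for c
  proof -
    obtain h where h: "h \<in> H" "c = H #> (g \<otimes> h)" using rcos_in_double_coset[OF assms c] .
    have c': "?L #> h \<in> rcosets_in G ?L H" unfolding rcosets_in_def using h(1) by blast
    have "c = ?\<phi> (?L #> h)"
      using h(2) rcos_conj_eq_iff[OF assms h(1) rep(1)[OF c']] rep(2)[OF c', symmetric] by simp
    with c' show ?thesis by blast
  qed
  ultimately show ?thesis unfolding bij_betw_def by blast
qed

lemma finprod_rcosets_in_double_coset:
  assumes "comm_monoid M" "subgroup H G" "g \<in> carrier G" "F \<in> carrier G \<rightarrow> carrier M"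
    and invariant: "\<And>h x. h \<in> H \<Longrightarrow> x \<in> carrier G \<Longrightarrow> F (h \<otimes> x) = F x"
  shows "finprod M (\<lambda>c. F (coset_rep c)) {c \<in> rcosets H. c \<subseteq> double_coset G H g}
       = coset_sum M G (H \<inter> conj_sub G g H) H (\<lambda>h. F (g \<otimes> h))"
proof -
  interpret M: comm_monoid M by fact
  let ?L = "H \<inter> conj_sub G g H"
  note rep = coset_rep_rcosets_in(1)[OF subgroup_inter_conj_sub[OF assms(2,3)] assms(2) Int_lower1]
  note bij = bij_betw_rcosets_in_double_coset[OF assms(2,3)]
  have gr: "g \<otimes> coset_rep c \<in> carrier G" if "c \<in> rcosets_in G ?L H" for c
    using rep[OF that] assms(3) subgroup.mem_carrier[OF assms(2)] by blast
  have "F (coset_rep c) \<in> carrier M" if "c \<in> rcosets H" for c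
    using coset_rep_rcosets_in(1)[OF assms(2) subgroup_self subgroup.subset[OF assms(2)]] that assms(4)
    unfolding rcosets_in_carrier by blast
  then have "finprod M (\<lambda>c. F (coset_rep c)) {c \<in> rcosets H. c \<subseteq> double_coset G H g}
      = finprod M (\<lambda>c. F (coset_rep (H #> (g \<otimes> coset_rep c)))) (rcosets_in G ?L H)"
    unfolding bij_betw_imp_surj_on[OF bij, symmetric]
    by (intro M.finprod_reindex bij_betw_imp_inj_on[OF bij]) (auto simp: bij_betw_imp_surj_on[OF bij])
  also have "\<dots> = coset_sum M G ?L H (\<lambda>h. F (g \<otimes> h))"
    unfolding coset_sum_def
    by (rule M.finprod_cong'[OF refl])
       (use gr assms(4) coset_rep_eval[OF assms(2) gr invariant[OF _ gr]] in auto)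
  finally show ?thesis .
qed

lemma coset_sum_double_coset_decomposition:
  assumes "comm_monoid M" "finite (carrier G)" "subgroup H G" "F \<in> carrier G \<rightarrow> carrier M"
    and invariant: "\<And>h x. h \<in> H \<Longrightarrow> x \<in> carrier G \<Longrightarrow> F (h \<otimes> x) = F x"
  shows "finprod M (\<lambda>D. coset_sum M G (H \<inter> conj_sub G (coset_rep D) H) H (\<lambda>h. F (coset_rep D \<otimes> h)))
           (double_coset G H ` carrier G)
         = coset_sum M G H (carrier G) F"
proof -
  interpret M: comm_monoid M by fact
  let ?S = "\<lambda>D. {c \<in> rcosets H. c \<subseteq> D}"
  note rep = coset_rep_double_coset[OF assms(3)]
  have "coset_sum M G H (carrier G) F
      = finprod M (\<lambda>c. F (coset_rep c)) (\<Union>D \<in> double_coset G H ` carrier G. ?S D)"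
    unfolding coset_sum_def rcosets_in_carrier rcosets_eq_Union_double_cosets[OF assms(3), symmetric] ..
  also have "\<dots> = finprod M (\<lambda>D. finprod M (\<lambda>c. F (coset_rep c)) (?S D)) (double_coset G H ` carrier G)"
    by (rule M.finprod_UN_disjoint[OF _ _ rcosets_in_double_cosets_disjoint[OF assms(3)]])
       (use assms(2,4) finite_rcosets_in[OF assms(2) subset_refl, of H]
          coset_rep_rcosets_in(1)[OF assms(3) subgroup_self subgroup.subset[OF assms(3)]]
          in \<open>auto simp: rcosets_in_carrier\<close>)
  also have "\<dots> = finprod M (\<lambda>D. coset_sum M G (H \<inter> conj_sub G (coset_rep D) H) H
                    (\<lambda>h. F (coset_rep D \<otimes> h))) (double_coset G H ` carrier G)"
  proof (rule M.finprod_cong'[OF refl])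
    fix D assume D: "D \<in> double_coset G H ` carrier G"
    from rep(2)[OF D] have "?S D = ?S (double_coset G H (coset_rep D))" by (rule arg_cong)
    then show "finprod M (\<lambda>c. F (coset_rep c)) (?S D)
        = coset_sum M G (H \<inter> conj_sub G (coset_rep D) H) H (\<lambda>h. F (coset_rep D \<otimes> h))"
      using finprod_rcosets_in_double_coset[OF assms(1,3) rep(1)[OF D] assms(4) invariant] by simp
  next
    show "(\<lambda>D. coset_sum M G (H \<inter> conj_sub G (coset_rep D) H) H (\<lambda>h. F (coset_rep D \<otimes> h)))
        \<in> double_coset G H ` carrier G \<rightarrow> carrier M"
    proof
      fix D assume D: "D \<in> double_coset G H ` carrier G"
      show "coset_sum M G (H \<inter> conj_sub G (coset_rep D) H) H (\<lambda>h. F (coset_rep D \<otimes> h)) \<in> carrier M"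
        by (rule coset_sum_closed[OF assms(1) subgroup_inter_conj_sub[OF assms(3) rep(1)[OF D]] assms(3)
              Int_lower1])
           (use assms(4) rep(1)[OF D] subgroup.mem_carrier[OF assms(3)] in auto)
    qed
  qed
  finally show ?thesis by simp
qed

end

section \<open>Quotients by subgroups and transfer maps\<close>

locale group_action_quotients = preadditive_category C + group G
  for C :: "('o, 'm, 'x) addcat_scheme" and G :: "('g, 'b) monoid_scheme" (structure) +
  fixes X :: 'o and act :: "'g \<Rightarrow> 'm" and Q :: "'g set \<Rightarrow> 'o" and p :: "'g set \<Rightarrow> 'm"
  assumes finite_carrier: "finite (carrier G)"
    and action: "group_action_obj C G X act"
    and quotient: "subgroup L G \<Longrightarrow> is_cat_quotient C X act L (Q L) (p L)"
begin

lemma X_obj: "X \<in> cObj C"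
  using action unfolding group_action_obj_def by blast

lemma act_hom: "g \<in> carrier G \<Longrightarrow> act g \<in> cHom C X X"
  using action unfolding group_action_obj_def by blast

lemma act_one: "act \<one> = cId C X"
  using action unfolding group_action_obj_def by blast

lemma act_mult: "g \<in> carrier G \<Longrightarrow> h \<in> carrier G \<Longrightarrow> act (g \<otimes> h) = cComp C (act g) (act h)"
  using action unfolding group_action_obj_def by blast

lemma Q_obj: "subgroup L G \<Longrightarrow> Q L \<in> cObj C"
  using quotient unfolding is_cat_quotient_def by blast

lemma p_hom: "subgroup L G \<Longrightarrow> p L \<in> cHom C X (Q L)"
  using quotient unfolding is_cat_quotient_def by blast

lemma p_act_invariant: "subgroup L G \<Longrightarrow> l \<in> L \<Longrightarrow> cComp C (p L) (act l) = p L"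
  using quotient unfolding is_cat_quotient_def by blast

lemma p_act_hom:
  assumes "subgroup L G" "k \<in> carrier G"
  shows "cComp C (p L) (act k) \<in> cHom C X (Q L)"
  using comp_closed[OF X_obj X_obj Q_obj[OF assms(1)] act_hom[OF assms(2)] p_hom[OF assms(1)]] .

lemma p_act_act:
  assumes "subgroup L G" "x \<in> carrier G" "y \<in> carrier G"
  shows "cComp C (cComp C (p L) (act x)) (act y) = cComp C (p L) (act (x \<otimes> y))"
  using comp_assoc[OF X_obj X_obj X_obj Q_obj[OF assms(1)] act_hom[OF assms(3)] act_hom[OF
      assms(2)] p_hom[OF assms(1)]]
    act_mult[OF assms(2,3)] by simp

lemma invariant_comp_p:
  assumes "subgroup L G" "Z \<in> cObj C" "u \<in> cHom C (Q L) Z" "l \<in> L"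
  shows "cComp C (cComp C u (p L)) (act l) = cComp C u (p L)"
proof -
  have "l \<in> carrier G" using subgroup.mem_carrier[OF assms(1,4)] .
  then show ?thesis
    using comp_assoc[OF X_obj X_obj Q_obj[OF assms(1)] assms(2) act_hom p_hom[OF assms(1)] assms(3)]
      p_act_invariant[OF assms(1,4)] by simp
qed

lemma quotient_lift:
  assumes "subgroup L G" "Z \<in> cObj C" "f \<in> cHom C X Z" "\<And>l. l \<in> L \<Longrightarrow> cComp C f (act l) = f"
  shows "\<exists>!u. u \<in> cHom C (Q L) Z \<and> cComp C u (p L) = f"
  using quotient[OF assms(1)] assms(2-4) unfolding is_cat_quotient_def by blast

lemma quotient_hom_eqI:
  assumes "subgroup L G" "Z \<in> cObj C" "u \<in> cHom C (Q L) Z" "v \<in> cHom C (Q L) Z"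
    and "cComp C u (p L) = cComp C v (p L)"
  shows "u = v"
  using quotient_lift[OF assms(1,2) comp_closed[OF X_obj Q_obj[OF assms(1)] assms(2) p_hom[OF
      assms(1)] assms(4)]
      invariant_comp_p[OF assms(1,2,4)]] assms(3-5)
  by blast

lemma qmap_char:
  assumes "subgroup L G" "subgroup M G" "g \<in> carrier G" "\<And>l. l \<in> L \<Longrightarrow> g \<otimes> l \<otimes> inv g \<in> M"
  shows "qmap C act Q p L M g \<in> cHom C (Q L) (Q M)"
    and "cComp C (qmap C act Q p L M g) (p L) = cComp C (p M) (act g)"
proof -
  have "cComp C (cComp C (p M) (act g)) (act l) = cComp C (p M) (act g)" if "l \<in> L" for l
  proof -
    have lG: "l \<in> carrier G" using subgroup.mem_carrier[OF assms(1) that] .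
    have "g \<otimes> l = (g \<otimes> l \<otimes> inv g) \<otimes> g" using assms(3) lG by (simp add: m_assoc)
    then have "cComp C (p M) (act (g \<otimes> l)) = cComp C (p M) (act g)"
      using p_act_act[OF assms(2) _ assms(3)] p_act_invariant[OF assms(2) assms(4)[OF that]] assms(3) lG
      by (metis m_closed subgroup.mem_carrier[OF assms(2) assms(4)[OF that]])
    then show ?thesis using p_act_act[OF assms(2,3) lG] by simp
  qed
  from theI'[OF quotient_lift[OF assms(1) Q_obj[OF assms(2)] p_act_hom[OF assms(2,3)] this]]
  show "qmap C act Q p L M g \<in> cHom C (Q L) (Q M)"
    and "cComp C (qmap C act Q p L M g) (p L) = cComp C (p M) (act g)"
    unfolding qmap_def by auto
qed

definition transfer :: "'g set \<Rightarrow> 'g set \<Rightarrow> 'm" where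
  "transfer L K = (THE u. u \<in> cHom C (Q K) (Q L) \<and>
     cComp C u (p K) = coset_sum (hom_group C X (Q L)) G L K (\<lambda>k. cComp C (p L) (act k)))"

lemma coset_sum_comp_right:
  assumes "subgroup L G" "subgroup K G" "L \<subseteq> K" "B \<in> cObj C" "D \<in> cObj C" "v \<in> cHom C X B"
    and "F \<in> K \<rightarrow> cHom C B D"
  shows "cComp C (coset_sum (hom_group C B D) G L K F) v = coset_sum (hom_group C X D) G L K (\<lambda>k.
      cComp C (F k) v)"
  using coset_sum_hom[OF comm_group_hom_group comm_group_hom_group comp_right_hom[OF X_obj assms(4,5,6)]
      finite_carrier assms(1-3)] assms(4,5,7) X_obj by simp

lemma coset_sum_comp_left:
  assumes "subgroup L G" "subgroup K G" "L \<subseteq> K" "B \<in> cObj C" "D \<in> cObj C" "u \<in> cHom C B D"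
    and "F \<in> K \<rightarrow> cHom C X B"
  shows "cComp C u (coset_sum (hom_group C X B) G L K F) = coset_sum (hom_group C X D) G L K (\<lambda>k.
      cComp C u (F k))"
  using coset_sum_hom[OF comm_group_hom_group comm_group_hom_group comp_left_hom[OF X_obj assms(4,5,6)]
      finite_carrier assms(1-3)] assms(4,5,7) X_obj by simp

lemma transfer_char:
  assumes "subgroup L G" "subgroup K G" "L \<subseteq> K"
  shows "transfer L K \<in> cHom C (Q K) (Q L)"
    and "cComp C (transfer L K) (p K) = coset_sum (hom_group C X (Q L)) G L K (\<lambda>k. cComp C (p L)
        (act k))"
proof -
  let ?M = "hom_group C X (Q L)"
  have KG: "k \<in> K \<Longrightarrow> k \<in> carrier G" for k using subgroup.mem_carrier[OF assms(2)] .
  have F: "(\<lambda>k. cComp C (p L) (act k)) \<in> K \<rightarrow> carrier ?M" using p_act_hom[OF assms(1)] KG by simp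
  have M: "comm_monoid ?M" using comm_monoid_hom_group[OF X_obj Q_obj[OF assms(1)]] .
  have "cComp C (coset_sum ?M G L K (\<lambda>k. cComp C (p L) (act k))) (act y)
      = coset_sum ?M G L K (\<lambda>k. cComp C (p L) (act k))" if y: "y \<in> K" for y
  proof -
    have "cComp C (coset_sum ?M G L K (\<lambda>k. cComp C (p L) (act k))) (act y)
        = coset_sum ?M G L K (\<lambda>k. cComp C (cComp C (p L) (act k)) (act y))"
      by (rule coset_sum_comp_right[OF assms X_obj Q_obj[OF assms(1)] act_hom[OF KG[OF y]]])
         (use F in simp)
    also have "\<dots> = coset_sum ?M G L K (\<lambda>k. cComp C (p L) (act (k \<otimes> y)))"
      by (rule coset_sum_cong[OF M assms])
         (use p_act_act[OF assms(1) KG KG[OF y]] p_act_hom[OF assms(1)] KG y in auto)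
    also have "\<dots> = coset_sum ?M G L K (\<lambda>k. cComp C (p L) (act k))"
    proof (rule coset_sum_right_translate[OF M assms F _ y])
      fix l k assume "l \<in> L" "k \<in> K"
      then show "cComp C (p L) (act (l \<otimes> k)) = cComp C (p L) (act k)"
        using p_act_act[OF assms(1)] p_act_invariant[OF assms(1)] KG assms(3) by (metis subsetD)
    qed
    finally show ?thesis .
  qed
  then have "\<exists>!u. u \<in> cHom C (Q K) (Q L) \<and>
      cComp C u (p K) = coset_sum ?M G L K (\<lambda>k. cComp C (p L) (act k))"
    using quotient_lift[OF assms(2) Q_obj[OF assms(1)]] coset_sum_closed[OF M assms F] by simp
  from theI'[OF this] show "transfer L K \<in> cHom C (Q K) (Q L)"
    and "cComp C (transfer L K) (p K) = coset_sum ?M G L K (\<lambda>k. cComp C (p L) (act k))"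
    unfolding transfer_def by auto
qed

lemma qmap_comp_transfer:
  assumes "subgroup L G" "subgroup K G" "L \<subseteq> K" "subgroup M G" "a \<in> carrier G"
    and "\<And>l. l \<in> L \<Longrightarrow> a \<otimes> l \<otimes> inv a \<in> M"
  shows "cComp C (cComp C (qmap C act Q p L M a) (transfer L K)) (p K)
       = coset_sum (hom_group C X (Q M)) G L K (\<lambda>k. cComp C (p M) (act (a \<otimes> k)))"
proof -
  note q = qmap_char[OF assms(1,4,5,6)]
  have KG: "k \<in> K \<Longrightarrow> k \<in> carrier G" for k using subgroup.mem_carrier[OF assms(2)] .
  have "cComp C (cComp C (qmap C act Q p L M a) (transfer L K)) (p K)
      = cComp C (qmap C act Q p L M a) (cComp C (transfer L K) (p K))"
    by (rule comp_assoc[OF X_obj Q_obj[OF assms(2)] Q_obj[OF assms(1)] Q_obj[OF assms(4)]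
          p_hom[OF assms(2)] transfer_char(1)[OF assms(1-3)] q(1)])
  also have "\<dots> = coset_sum (hom_group C X (Q M)) G L K
      (\<lambda>k. cComp C (qmap C act Q p L M a) (cComp C (p L) (act k)))"
    unfolding transfer_char(2)[OF assms(1-3)]
    by (rule coset_sum_comp_left[OF assms(1-3) Q_obj[OF assms(1)] Q_obj[OF assms(4)] q(1)])
       (use p_act_hom[OF assms(1)] KG in auto)
  also have "\<dots> = coset_sum (hom_group C X (Q M)) G L K (\<lambda>k. cComp C (p M) (act (a \<otimes> k)))"
  proof (rule coset_sum_cong[OF comm_monoid_hom_group[OF X_obj Q_obj[OF assms(4)]]
        assms(1-3)])
    fix k assume "k \<in> K"
    then show "cComp C (qmap C act Q p L M a) (cComp C (p L) (act k)) = cComp C (p M) (act (a \<otimes> k))"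
      using comp_assoc[OF X_obj X_obj Q_obj[OF assms(1)] Q_obj[OF assms(4)] act_hom[OF KG]
          p_hom[OF assms(1)] q(1)]
        q(2) p_act_act[OF assms(4,5) KG] by simp
  qed (use p_act_hom[OF assms(4)] assms(5) KG in auto)
  finally show ?thesis .
qed

lemma qmap_one_comp_transfer:
  assumes "subgroup L G" "subgroup K G" "L \<subseteq> K"
  shows "cComp C (qmap C act Q p L K \<one>) (transfer L K)
       = nsmul C (Q K) (Q K) (card (rcosets_in G L K)) (cId C (Q K))"
proof (rule quotient_hom_eqI[OF assms(2) Q_obj[OF assms(2)]])
  note QK = Q_obj[OF assms(2)] and pK = p_hom[OF assms(2)]
  note one = one_conj_mem[OF assms(1,3)]
  note q = qmap_char[OF assms(1,2) one_closed one]
  show "cComp C (qmap C act Q p L K \<one>) (transfer L K) \<in> cHom C (Q K) (Q K)"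
    by (rule comp_closed[OF QK Q_obj[OF assms(1)] QK transfer_char(1)[OF assms] q(1)])
  show "nsmul C (Q K) (Q K) (card (rcosets_in G L K)) (cId C (Q K)) \<in> cHom C (Q K) (Q K)"
    by (rule nsmul_closed[OF QK QK id_closed[OF QK]])
  have KG: "k \<in> K \<Longrightarrow> k \<in> carrier G" for k using subgroup.mem_carrier[OF assms(2)] .
  have "cComp C (cComp C (qmap C act Q p L K \<one>) (transfer L K)) (p K)
      = coset_sum (hom_group C X (Q K)) G L K (\<lambda>k. cComp C (p K) (act (\<one> \<otimes> k)))"
    by (rule qmap_comp_transfer[OF assms assms(2) one_closed one])
  also have "\<dots> = coset_sum (hom_group C X (Q K)) G L K (\<lambda>_. p K)"
    by (rule coset_sum_cong[OF comm_monoid_hom_group[OF X_obj QK] assms])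
       (use pK KG p_act_invariant[OF assms(2)] in auto)
  also have "\<dots> = nsmul C X (Q K) (card (rcosets_in G L K)) (p K)"
    using coset_sum_const[OF comm_monoid_hom_group[OF X_obj QK]] pK
      nsmul_eq_nat_pow[OF X_obj QK pK] by simp
  also have "\<dots> = cComp C (nsmul C (Q K) (Q K) (card (rcosets_in G L K)) (cId C (Q K))) (p K)"
    using comp_nsmul_right[OF X_obj QK QK pK id_closed[OF QK]] comp_id_left[OF X_obj QK pK] by simp
  finally show "cComp C (cComp C (qmap C act Q p L K \<one>) (transfer L K)) (p K)
      = cComp C (nsmul C (Q K) (Q K) (card (rcosets_in G L K)) (cId C (Q K))) (p K)" .
qed

lemma qmap_one_comp_qmap:
  assumes "subgroup L G" "subgroup M G" "subgroup K G" "M \<subseteq> K" "a \<in> carrier G"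
    and "\<And>l. l \<in> L \<Longrightarrow> a \<otimes> l \<otimes> inv a \<in> M"
  shows "cComp C (qmap C act Q p M K \<one>) (qmap C act Q p L M a) = qmap C act Q p L K a"
proof -
  note one = one_conj_mem[OF assms(2,4)]
  note qLM = qmap_char[OF assms(1,2,5,6)] and qMK = qmap_char[OF assms(2,3) one_closed one]
  have "a \<otimes> l \<otimes> inv a \<in> K" if "l \<in> L" for l using assms(4,6) that by blast
  note qLK = qmap_char[OF assms(1,3,5) this]
  show ?thesis
  proof (rule quotient_hom_eqI[OF assms(1) Q_obj[OF assms(3)] _ qLK(1)])
    show "cComp C (qmap C act Q p M K \<one>) (qmap C act Q p L M a) \<in> cHom C (Q L) (Q K)"
      by (rule comp_closed[OF Q_obj[OF assms(1)] Q_obj[OF assms(2)] Q_obj[OF assms(3)] qLM(1) qMK(1)])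
    have "cComp C (cComp C (qmap C act Q p M K \<one>) (qmap C act Q p L M a)) (p L)
        = cComp C (qmap C act Q p M K \<one>) (cComp C (p M) (act a))"
      using comp_assoc[OF X_obj Q_obj[OF assms(1)] Q_obj[OF assms(2)] Q_obj[OF assms(3)]
          p_hom[OF assms(1)] qLM(1) qMK(1)] qLM(2) by simp
    also have "\<dots> = cComp C (p K) (act a)"
      using comp_assoc[OF X_obj X_obj Q_obj[OF assms(2)] Q_obj[OF assms(3)]
          act_hom[OF assms(5)] p_hom[OF assms(2)] qMK(1)] qMK(2)
        p_act_act[OF assms(3) one_closed assms(5)] act_one comp_id_right[OF X_obj Q_obj[OF
            assms(3)] p_hom[OF assms(3)]]
      by simp
    finally show "cComp C (cComp C (qmap C act Q p M K \<one>) (qmap C act Q p L M a)) (p L)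
        = cComp C (qmap C act Q p L K a) (p L)" using qLK(2) by simp
  qed
qed

lemma qmap_eq_qmap_one:
  assumes "subgroup L G" "subgroup K G" "L \<subseteq> K" "k \<in> K"
  shows "qmap C act Q p L K k = qmap C act Q p L K \<one>"
proof -
  have kG: "k \<in> carrier G" using subgroup.mem_carrier[OF assms(2,4)] .
  have conj: "k \<otimes> l \<otimes> inv k \<in> K" if "l \<in> L" for l
    using that assms(2-4) subgroup.m_closed subgroup.m_inv_closed by (metis subsetD)
  note q = qmap_char[OF assms(1,2) kG conj] and q1 = qmap_char[OF assms(1,2) one_closed
      one_conj_mem[OF assms(1,3)]]
  show ?thesis
  proof (rule quotient_hom_eqI[OF assms(1) Q_obj[OF assms(2)] q(1) q1(1)])
    show "cComp C (qmap C act Q p L K k) (p L) = cComp C (qmap C act Q p L K \<one>) (p L)"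
      using q(2) q1(2) p_act_invariant[OF assms(2,4)] act_one
        comp_id_right[OF X_obj Q_obj[OF assms(2)] p_hom[OF assms(2)]] by simp
  qed
qed

end

section \<open>The double coset fork\<close>

locale double_coset_fork = group_action_quotients C G X act Q p
  for C :: "('o, 'm, 'x) addcat_scheme" and G :: "('g, 'b) monoid_scheme" (structure)
    and X act Q p +
  fixes H :: "'g set" and P :: 'o and \<iota> :: "'g \<Rightarrow> 'm" and d0 d1 :: 'm
  assumes subgroup_H: "subgroup H G"
    and index_invertible: "invertible_in_homs C (card (carrier G) div card H)"
    and coproduct: "is_coproduct C (carrier G) (\<lambda>g. Q (H \<inter> conj_sub G g H)) P \<iota>"
    and d0_hom: "d0 \<in> cHom C P (Q H)" and d1_hom: "d1 \<in> cHom C P (Q H)"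
    and d0_iota: "g \<in> carrier G \<Longrightarrow> cComp C d0 (\<iota> g) = qmap C act Q p (H \<inter> conj_sub G g H) H \<one>"
    and d1_iota: "g \<in> carrier G \<Longrightarrow> cComp C d1 (\<iota> g) = qmap C act Q p (H \<inter> conj_sub G g H) H g"
begin

abbreviation conj_meet :: "'g \<Rightarrow> 'g set" where
  "conj_meet g \<equiv> H \<inter> conj_sub G g H"

abbreviation e :: 'm where
  "e \<equiv> qmap C act Q p H (carrier G) \<one>"

lemma subgroup_conj_meet: "g \<in> carrier G \<Longrightarrow> subgroup (conj_meet g) G"
  by (rule subgroup_inter_conj_sub[OF subgroup_H])

lemma conj_meet_conj: "g \<in> carrier G \<Longrightarrow> l \<in> conj_meet g \<Longrightarrow> g \<otimes> l \<otimes> inv g \<in> H"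
  using conj_sub_mem[OF subgroup_H] by blast

lemma conj_meet_one: "g \<in> carrier G \<Longrightarrow> l \<in> conj_meet g \<Longrightarrow> \<one> \<otimes> l \<otimes> inv \<one> \<in> H"
  by (rule one_conj_mem[OF subgroup_conj_meet Int_lower1])

lemma P_obj: "P \<in> cObj C"
  using coproduct unfolding is_coproduct_def by (elim conjE)

lemma iota_hom: "g \<in> carrier G \<Longrightarrow> \<iota> g \<in> cHom C (Q (conj_meet g)) P"
  using coproduct unfolding is_coproduct_def by (elim conjE) simp

lemma coproduct_hom_eqI:
  assumes "Z \<in> cObj C" "u \<in> cHom C P Z" "v \<in> cHom C P Z"
    and "\<And>g. g \<in> carrier G \<Longrightarrow> cComp C u (\<iota> g) = cComp C v (\<iota> g)"
  shows "u = v"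
proof -
  note universal = coproduct[unfolded is_coproduct_def, THEN conjunct2, THEN conjunct2, rule_format]
  have "\<forall>g\<in>carrier G. cComp C v (\<iota> g) \<in> cHom C (Q (conj_meet g)) Z"
    using comp_closed[OF Q_obj[OF subgroup_conj_meet] P_obj assms(1) iota_hom assms(3)] by blast
  from universal[OF assms(1) this[rule_format]] show ?thesis using assms(2-4) by blast
qed

lemma e_char: "e \<in> cHom C (Q H) (Q (carrier G))" "cComp C e (p H) = p (carrier G)"
  using qmap_char[OF subgroup_H subgroup_self one_closed one_conj_mem[OF subgroup_H
      subgroup.subset[OF subgroup_H]]]
    act_one comp_id_right[OF X_obj Q_obj[OF subgroup_self] p_hom[OF subgroup_self]] by simp_all

lemma fork_coequalizes: "cComp C e d0 = cComp C e d1"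
proof (rule coproduct_hom_eqI[OF Q_obj[OF subgroup_self]])
  note QH = Q_obj[OF subgroup_H] and QG = Q_obj[OF subgroup_self]
  show "cComp C e d0 \<in> cHom C P (Q (carrier G))" "cComp C e d1 \<in> cHom C P (Q (carrier G))"
    using comp_closed[OF P_obj QH QG _ e_char(1)] d0_hom d1_hom by auto
  fix g assume g: "g \<in> carrier G"
  note QL = Q_obj[OF subgroup_conj_meet[OF g]]
  have "cComp C (cComp C e d0) (\<iota> g) = qmap C act Q p (conj_meet g) (carrier G) \<one>"
    using comp_assoc[OF QL P_obj QH QG iota_hom[OF g] d0_hom e_char(1)] d0_iota[OF g]
      qmap_one_comp_qmap[OF subgroup_conj_meet[OF g] subgroup_H subgroup_self
        subgroup.subset[OF subgroup_H] one_closed conj_meet_one[OF g]]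
    by simp
  also have "\<dots> = qmap C act Q p (conj_meet g) (carrier G) g"
    by (rule qmap_eq_qmap_one[OF subgroup_conj_meet[OF g] subgroup_self _ g, symmetric])
       (use subgroup.subset[OF subgroup_H] in blast)
  also have "\<dots> = cComp C (cComp C e d1) (\<iota> g)"
    using comp_assoc[OF QL P_obj QH QG iota_hom[OF g] d1_hom e_char(1)] d1_iota[OF g]
      qmap_one_comp_qmap[OF subgroup_conj_meet[OF g] subgroup_H subgroup_self
        subgroup.subset[OF subgroup_H] g conj_meet_conj[OF g]]
    by simp
  finally show "cComp C (cComp C e d0) (\<iota> g) = cComp C (cComp C e d1) (\<iota> g)" .
qed

lemma e_comp_transfer:
  "cComp C e (transfer H (carrier G)) = nsmul C (Q (carrier G)) (Q (carrier G))
     (card (carrier G) div card H) (cId C (Q (carrier G)))"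
  using qmap_one_comp_transfer[OF subgroup_H subgroup_self subgroup.subset[OF subgroup_H]]
    card_rcosets_in_carrier[OF finite_carrier subgroup_H] by simp

text \<open>This is \<open>n\<close> times the map \<open>t\<close> of the splitting.\<close>
definition double_coset_transfer :: 'm where
  "double_coset_transfer = finprod (hom_group C (Q H) P)
     (\<lambda>D. cComp C (\<iota> (coset_rep D)) (transfer (conj_meet (coset_rep D)) H)) (double_coset G H `
         carrier G)"

lemma double_coset_transfer_hom: "double_coset_transfer \<in> cHom C (Q H) P"
proof -
  note rep = coset_rep_double_coset(1)[OF subgroup_H]
  have "(\<lambda>D. cComp C (\<iota> (coset_rep D)) (transfer (conj_meet (coset_rep D)) H))
      \<in> double_coset G H ` carrier G \<rightarrow> carrier (hom_group C (Q H) P)"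
    using comp_closed[OF Q_obj[OF subgroup_H] Q_obj[OF subgroup_conj_meet[OF rep]] P_obj
        transfer_char(1)[OF subgroup_conj_meet[OF rep] subgroup_H Int_lower1] iota_hom[OF rep]]
    by simp
  from comm_monoid.finprod_closed[OF comm_monoid_hom_group[OF Q_obj[OF subgroup_H] P_obj] this]
  show ?thesis unfolding double_coset_transfer_def by simp
qed

lemma comp_iota_transfer:
  assumes d: "d \<in> cHom C P (Q H)" and g: "g \<in> carrier G" and a: "a \<in> carrier G"
    and conj: "\<And>l. l \<in> conj_meet g \<Longrightarrow> a \<otimes> l \<otimes> inv a \<in> H"
    and d_iota: "cComp C d (\<iota> g) = qmap C act Q p (conj_meet g) H a"
  shows "cComp C (cComp C d (cComp C (\<iota> g) (transfer (conj_meet g) H))) (p H)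
       = coset_sum (hom_group C X (Q H)) G (conj_meet g) H (\<lambda>h. cComp C (p H) (act (a \<otimes> h)))"
proof -
  note L = subgroup_conj_meet[OF g] and QH = Q_obj[OF subgroup_H]
  note tr = transfer_char(1)[OF L subgroup_H Int_lower1]
  have "cComp C d (cComp C (\<iota> g) (transfer (conj_meet g) H))
      = cComp C (qmap C act Q p (conj_meet g) H a) (transfer (conj_meet g) H)"
    using comp_assoc[OF QH Q_obj[OF L] P_obj QH tr iota_hom[OF g] d] d_iota by simp
  then show ?thesis
    using qmap_comp_transfer[OF L subgroup_H Int_lower1 subgroup_H a conj] by simp
qed

lemma comp_double_coset_transfer:
  assumes d: "d \<in> cHom C P (Q H)" and a: "\<And>g. g \<in> carrier G \<Longrightarrow> a g \<in> carrier G"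
    and conj: "\<And>g l. g \<in> carrier G \<Longrightarrow> l \<in> conj_meet g \<Longrightarrow> a g \<otimes> l \<otimes> inv (a g) \<in> H"
    and d_iota: "\<And>g. g \<in> carrier G \<Longrightarrow> cComp C d (\<iota> g) = qmap C act Q p (conj_meet g) H (a g)"
  shows "cComp C (cComp C d double_coset_transfer) (p H)
       = finprod (hom_group C X (Q H)) (\<lambda>D. coset_sum (hom_group C X (Q H)) G (conj_meet (coset_rep D)) H
            (\<lambda>h. cComp C (p H) (act (a (coset_rep D) \<otimes> h)))) (double_coset G H ` carrier G)"
proof -
  note QH = Q_obj[OF subgroup_H] and pH = p_hom[OF subgroup_H]
  note rep = coset_rep_double_coset(1)[OF subgroup_H]
  let ?DC = "double_coset G H ` carrier G"
  let ?T = "\<lambda>D. cComp C (\<iota> (coset_rep D)) (transfer (conj_meet (coset_rep D)) H)"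
  have T: "?T D \<in> cHom C (Q H) P" if "D \<in> ?DC" for D
    using comp_closed[OF QH Q_obj[OF subgroup_conj_meet[OF rep[OF that]]] P_obj
        transfer_char(1)[OF subgroup_conj_meet[OF rep[OF that]] subgroup_H Int_lower1] iota_hom[OF
            rep[OF that]]] .
  have dT: "cComp C d (?T D) \<in> cHom C (Q H) (Q H)" if "D \<in> ?DC" for D
    using comp_closed[OF QH P_obj QH T[OF that] d] .
  have fin: "finite ?DC" using finite_carrier by simp
  have "cComp C (cComp C d double_coset_transfer) (p H)
      = finprod (hom_group C X (Q H)) (\<lambda>D. cComp C (cComp C d (?T D)) (p H)) ?DC"
    unfolding double_coset_transfer_def
    using comp_finprod_left[OF QH P_obj QH d fin] comp_finprod_right[OF X_obj QH QH pH fin] T dT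
    by (simp add: Pi_iff)
  also have "\<dots> = finprod (hom_group C X (Q H)) (\<lambda>D. coset_sum (hom_group C X (Q H)) G (conj_meet
      (coset_rep D)) H
            (\<lambda>h. cComp C (p H) (act (a (coset_rep D) \<otimes> h)))) ?DC"
    using comp_iota_transfer[OF d rep a[OF rep] conj[OF rep] d_iota[OF rep]]
      comp_closed[OF X_obj QH QH pH dT]
    by (intro comm_monoid.finprod_cong'[OF comm_monoid_hom_group[OF X_obj QH] refl])
       (simp_all add: Pi_iff)
  finally show ?thesis .
qed

lemma d0_comp_double_coset_transfer:
  "cComp C d0 double_coset_transfer = nsmul C (Q H) (Q H) (card (carrier G) div card H) (cId C (Q H))"
proof (rule quotient_hom_eqI[OF subgroup_H Q_obj[OF subgroup_H]])
  note QH = Q_obj[OF subgroup_H] and pH = p_hom[OF subgroup_H]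
  let ?M = "hom_group C X (Q H)"
  have M: "comm_monoid ?M" using comm_monoid_hom_group[OF X_obj QH] .
  have HG: "h \<in> H \<Longrightarrow> h \<in> carrier G" for h using subgroup.mem_carrier[OF subgroup_H] .
  show "cComp C d0 double_coset_transfer \<in> cHom C (Q H) (Q H)"
    by (rule comp_closed[OF QH P_obj QH double_coset_transfer_hom d0_hom])
  show "nsmul C (Q H) (Q H) (card (carrier G) div card H) (cId C (Q H)) \<in> cHom C (Q H) (Q H)"
    by (rule nsmul_closed[OF QH QH id_closed[OF QH]])
  have "cComp C (cComp C d0 double_coset_transfer) (p H)
      = finprod ?M (\<lambda>D. coset_sum ?M G (conj_meet (coset_rep D)) H (\<lambda>h. cComp C (p H) (act (\<one> \<otimes> h))))
          (double_coset G H ` carrier G)"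
    by (rule comp_double_coset_transfer[OF d0_hom one_closed conj_meet_one d0_iota])
  also have "\<dots> = finprod ?M (\<lambda>D. coset_sum ?M G (conj_meet (coset_rep D)) H (\<lambda>h. p H))
          (double_coset G H ` carrier G)"
  proof (rule comm_monoid.finprod_cong'[OF M refl])
    fix D assume "D \<in> double_coset G H ` carrier G"
    then have g: "coset_rep D \<in> carrier G" by (rule coset_rep_double_coset(1)[OF subgroup_H])
    show "coset_sum ?M G (conj_meet (coset_rep D)) H (\<lambda>h. cComp C (p H) (act (\<one> \<otimes> h)))
        = coset_sum ?M G (conj_meet (coset_rep D)) H (\<lambda>h. p H)"
      by (rule coset_sum_cong[OF M subgroup_conj_meet[OF g] subgroup_H Int_lower1])
         (use pH HG p_act_invariant[OF subgroup_H] in auto)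
  qed (use coset_sum_closed[OF M subgroup_conj_meet[OF coset_rep_double_coset(1)[OF subgroup_H]]
        subgroup_H Int_lower1] pH in \<open>simp add: Pi_iff\<close>)
  also have "\<dots> = coset_sum ?M G H (carrier G) (\<lambda>_. p H)"
    using coset_sum_double_coset_decomposition[OF M finite_carrier subgroup_H, of "\<lambda>_. p H"] pH by simp
  also have "\<dots> = cComp C (nsmul C (Q H) (Q H) (card (carrier G) div card H) (cId C (Q H))) (p H)"
    using coset_sum_const[OF M, of "p H"] pH nsmul_eq_nat_pow[OF X_obj QH pH]
      card_rcosets_in_carrier[OF finite_carrier subgroup_H]
      comp_nsmul_right[OF X_obj QH QH pH id_closed[OF QH]] comp_id_left[OF X_obj QH pH]
    by simp
  finally show "cComp C (cComp C d0 double_coset_transfer) (p H)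
      = cComp C (nsmul C (Q H) (Q H) (card (carrier G) div card H) (cId C (Q H))) (p H)" .
qed

lemma d1_comp_double_coset_transfer:
  "cComp C d1 double_coset_transfer = cComp C (transfer H (carrier G)) e"
proof (rule quotient_hom_eqI[OF subgroup_H Q_obj[OF subgroup_H]])
  note QH = Q_obj[OF subgroup_H] and QG = Q_obj[OF subgroup_self] and pH = p_hom[OF subgroup_H]
  note tr = transfer_char[OF subgroup_H subgroup_self subgroup.subset[OF subgroup_H]]
  let ?M = "hom_group C X (Q H)"
  have M: "comm_monoid ?M" using comm_monoid_hom_group[OF X_obj QH] .
  show "cComp C d1 double_coset_transfer \<in> cHom C (Q H) (Q H)"
    by (rule comp_closed[OF QH P_obj QH double_coset_transfer_hom d1_hom])
  show "cComp C (transfer H (carrier G)) e \<in> cHom C (Q H) (Q H)"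
    by (rule comp_closed[OF QH QG QH e_char(1) tr(1)])
  have "cComp C (cComp C d1 double_coset_transfer) (p H)
      = finprod ?M (\<lambda>D. coset_sum ?M G (conj_meet (coset_rep D)) H (\<lambda>h. cComp C (p H) (act
          (coset_rep D \<otimes> h))))
          (double_coset G H ` carrier G)"
    by (rule comp_double_coset_transfer[OF d1_hom _ conj_meet_conj d1_iota])
  also have "\<dots> = coset_sum ?M G H (carrier G) (\<lambda>k. cComp C (p H) (act k))"
  proof (rule coset_sum_double_coset_decomposition[OF M finite_carrier subgroup_H])
    show "(\<lambda>k. cComp C (p H) (act k)) \<in> carrier G \<rightarrow> carrier ?M" using p_act_hom[OF subgroup_H] by simp
    fix h x assume "h \<in> H" "x \<in> carrier G"
    then show "cComp C (p H) (act (h \<otimes> x)) = cComp C (p H) (act x)"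
      using p_act_act[OF subgroup_H _ \<open>x \<in> carrier G\<close>] p_act_invariant[OF subgroup_H]
        subgroup.mem_carrier[OF subgroup_H] by metis
  qed
  also have "\<dots> = cComp C (transfer H (carrier G)) (cComp C e (p H))"
    using tr(2) e_char(2) by simp
  also have "\<dots> = cComp C (cComp C (transfer H (carrier G)) e) (p H)"
    using comp_assoc[OF X_obj QH QG QH pH e_char(1) tr(1)] by simp
  finally show "cComp C (cComp C d1 double_coset_transfer) (p H)
      = cComp C (cComp C (transfer H (carrier G)) e) (p H)" .
qed

theorem split_fork: "split_fork C P (Q H) (Q (carrier G)) d0 d1 e"
  by (rule split_fork_of_scaled_splitting[OF index_invertible P_obj Q_obj[OF subgroup_H]
        Q_obj[OF subgroup_self] d0_hom d1_hom e_char(1)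
        transfer_char(1)[OF subgroup_H subgroup_self subgroup.subset[OF subgroup_H]]
        double_coset_transfer_hom fork_coequalizes e_comp_transfer
        d0_comp_double_coset_transfer d1_comp_double_coset_transfer])

end

theorem mainTheorem13:
  fixes C :: "('o, 'm) addcat" and G :: "('g, 'b) monoid_scheme"
    and X :: 'o and act :: "'g \<Rightarrow> 'm" and H :: "'g set"
    and Q :: "'g set \<Rightarrow> 'o" and p :: "'g set \<Rightarrow> 'm"
    and P :: 'o and \<iota> :: "'g \<Rightarrow> 'm" and d0 d1 :: 'm
  assumes "additive_category C"
    and "group G" and "finite (carrier G)"
    and "group_action_obj C G X act"
    and "subgroup H G"
    and "invertible_in_homs C (card (carrier G) div card H)"
    and "\<forall>L. subgroup L G \<longrightarrow> is_cat_quotient C X act L (Q L) (p L)"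
    and "is_coproduct C (carrier G) (\<lambda>g. Q (H \<inter> conj_sub G g H)) P \<iota>"
    and "d0 \<in> cHom C P (Q H)" and "d1 \<in> cHom C P (Q H)"
    and "\<forall>g\<in>carrier G. cComp C d0 (\<iota> g) = qmap C act Q p (H \<inter> conj_sub G g H) H \<one>\<^bsub>G\<^esub>"
    and "\<forall>g\<in>carrier G. cComp C d1 (\<iota> g) = qmap C act Q p (H \<inter> conj_sub G g H) H g"
  shows "split_fork C P (Q H) (Q (carrier G)) d0 d1 (qmap C act Q p H (carrier G) \<one>\<^bsub>G\<^esub>)"
proof -
  have "double_coset_fork C G X act Q p H P \<iota> d0 d1"
    by (intro double_coset_fork.intro group_action_quotients.intro preadditive_category.intro
        group_action_quotients_axioms.intro double_coset_fork_axioms.intro)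
       (use assms in \<open>auto simp: additive_category_def\<close>)
  then show ?thesis by (rule double_coset_fork.split_fork)
qed

end
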